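(* Let $\sigma : X^* \to M$ be a monoid choice of generators for a right cancellative monoid $M$. Then the loop automaton of $M$ with respect to $\sigma$ is the minimal automaton of the loop problem $L_\sigma(M)$.
   Context: Maps are written on the right. $X^*$ is the free monoid on $X$; a choice of generators is a surjective monoid morphism. Let $\overline{X} = \{\overline{x} : x \in X\}$ be new symbols, $\hat{X} = X \cup \overline{X}$. The loop automaton of $M$ w.r.t. $\sigma$ is the automaton over $\hat{X}$ with state set $M$, for each $a \in M$, $x \in X$ an edge $a \to a(x\sigma)$ labelled $x$ and an edge $a(x\sigma) \to a$ labelled $\overline{x}$, with start state and unique terminal state the identity of $M$; the loop problem $L_\sigma(M)$ is the language it accepts. An automaton (possibly infinite) is deterministic if edges are labelled by single letters and each state has at most one outgoing edge with each letter; trim if every state is reachable from the start state and can reach a terminal state. The cone of a state is the set of words labelling paths from it to a terminal state. The minimal automaton of a language $L$ is the unique (up to label-, start- and terminal-preserving isomorphism) deterministic trim automaton accepting $L$ in which no two distinct states have the same cone. *)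

theory Defs
  imports Main
begin

text \<open>A (possibly infinite) automaton over the alphabet 'a with states of type 's.
  Edges are labelled by words over the alphabet (so that "deterministic" has content).\<close>
record ('s, 'a) automaton =
  states :: "'s set"
  edges :: "('s \<times> 'a list \<times> 's) set"
  start :: 's
  terminals :: "'s set"

inductive path :: "('s, 'a) automaton \<Rightarrow> 's \<Rightarrow> 'a list \<Rightarrow> 's \<Rightarrow> bool"
  for A where
  path_nil: "p \<in> states A \<Longrightarrow> path A p [] p"
| path_step: "(p, u, q) \<in> edges A \<Longrightarrow> path A q w r \<Longrightarrow> path A p (u @ w) r"

definition wf_automaton :: "('s, 'a) automaton \<Rightarrow> bool" where
  "wf_automaton A \<longleftrightarrow> start A \<in> states A \<and> terminals A \<subseteq> states A \<and>
     (\<forall>(p, u, q) \<in> edges A. p \<in> states A \<and> q \<in> states A)"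

definition cone :: "('s, 'a) automaton \<Rightarrow> 's \<Rightarrow> 'a list set" where
  "cone A q = {w. \<exists>t \<in> terminals A. path A q w t}"

definition accepted_language :: "('s, 'a) automaton \<Rightarrow> 'a list set" where
  "accepted_language A = cone A (start A)"

definition deterministic :: "('s, 'a) automaton \<Rightarrow> bool" where
  "deterministic A \<longleftrightarrow>
     (\<forall>(p, u, q) \<in> edges A. length u = 1) \<and>
     (\<forall>p a q q'. (p, [a], q) \<in> edges A \<and> (p, [a], q') \<in> edges A \<longrightarrow> q = q')"

definition trim :: "('s, 'a) automaton \<Rightarrow> bool" where
  "trim A \<longleftrightarrow> (\<forall>q \<in> states A. (\<exists>w. path A (start A) w q) \<and> cone A q \<noteq> {})"

definition is_minimal_automaton_of :: "('s, 'a) automaton \<Rightarrow> 'a list set \<Rightarrow> bool" where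
  "is_minimal_automaton_of A L \<longleftrightarrow> wf_automaton A \<and> deterministic A \<and> trim A \<and>
     accepted_language A = L \<and> inj_on (cone A) (states A)"

definition choice_of_generators :: "('x list \<Rightarrow> 'm::monoid_mult) \<Rightarrow> bool" where
  "choice_of_generators \<sigma> \<longleftrightarrow> \<sigma> [] = 1 \<and> (\<forall>u v. \<sigma> (u @ v) = \<sigma> u * \<sigma> v) \<and> surj \<sigma>"

definition right_cancellative :: "'m::monoid_mult itself \<Rightarrow> bool" where
  "right_cancellative _ \<longleftrightarrow> (\<forall>a b c :: 'm. a * c = b * c \<longrightarrow> a = b)"

text \<open>Hat X = X \<union> overline X, encoded as 'x + 'x: Inl x is x, Inr x is overline x.
  Maps are written on the right, so a(x\<sigma>) is a * \<sigma> [x].\<close>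
definition loop_automaton :: "('x list \<Rightarrow> 'm::monoid_mult) \<Rightarrow> ('m, 'x + 'x) automaton" where
  "loop_automaton \<sigma> = \<lparr> states = UNIV,
     edges = {(a, [Inl x], a * \<sigma> [x]) | a x. True} \<union> {(a * \<sigma> [x], [Inr x], a) | a x. True},
     start = 1, terminals = {1} \<rparr>"

definition loop_problem :: "('x list \<Rightarrow> 'm::monoid_mult) \<Rightarrow> ('x + 'x) list set" where
  "loop_problem \<sigma> = accepted_language (loop_automaton \<sigma>)"

end

theory Submission
  imports Defs
begin

text \<open>Every state \<open>a\<close> is \<open>w\<sigma>\<close> for some word \<open>w\<close>. Reading \<open>w\<close> from the identity reaches \<open>a\<close>,
  and reading the overlined reverse of \<open>w\<close> from \<open>a\<close> leads back to the identity, so the automaton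
  is trim. A path labelled by overlined letters is forced backwards, since an edge labelled
  \<open>\<overline>x\<close> always goes from \<open>b(x\<sigma>)\<close> to \<open>b\<close>; hence \<open>a\<close> is the only state from which that
  overlined word leads to the identity, and distinct states have distinct cones. Right
  cancellativity is exactly what makes the overlined edges deterministic.\<close>

lemma choice_of_generators_prod_list:
  assumes "choice_of_generators \<sigma>"
  shows "\<sigma> w = (\<Prod>x\<leftarrow>w. \<sigma> [x])"
proof (induction w)
  case Nil
  show ?case using assms by (simp add: choice_of_generators_def)
next
  case (Cons x w)
  have "\<sigma> (x # w) = \<sigma> [x] * \<sigma> w"
    using assms unfolding choice_of_generators_def by (metis append_Cons append_Nil)
  then show ?case using Cons.IH by simp
qed

lemma loop_automaton_sel [simp]:
  "states (loop_automaton \<sigma>) = UNIV"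
  "start (loop_automaton \<sigma>) = 1"
  "terminals (loop_automaton \<sigma>) = {1}"
  by (simp_all add: loop_automaton_def)

lemma edges_loop_automaton_iff:
  "(p, u, q) \<in> edges (loop_automaton \<sigma>) \<longleftrightarrow>
     (\<exists>x. u = [Inl x] \<and> q = p * \<sigma> [x]) \<or> (\<exists>x. u = [Inr x] \<and> p = q * \<sigma> [x])"
  by (auto simp: loop_automaton_def)

lemma path_loop_automaton_Inl:
  "path (loop_automaton \<sigma>) a (map Inl w) (a * (\<Prod>x\<leftarrow>w. \<sigma> [x]))"
proof (induction w arbitrary: a)
  case Nil
  show ?case by (simp add: path_nil)
next
  case (Cons x w)
  have "(a, [Inl x], a * \<sigma> [x]) \<in> edges (loop_automaton \<sigma>)"
    by (simp add: edges_loop_automaton_iff)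
  from path_step[OF this Cons.IH] show ?case by (simp add: mult.assoc)
qed

lemma path_loop_automaton_Inr_iff:
  fixes \<sigma> :: "'x list \<Rightarrow> 'm::monoid_mult"
  shows "path (loop_automaton \<sigma>) p (map Inr u) q \<longleftrightarrow> p = q * (\<Prod>x\<leftarrow>rev u. \<sigma> [x])"
proof
  show "p = q * (\<Prod>x\<leftarrow>rev u. \<sigma> [x])" if "path (loop_automaton \<sigma>) p (map Inr u) q"
    using that
  proof (induction p "map Inr u :: ('x + 'x) list" q arbitrary: u rule: path.induct)
    case (path_nil p)
    then show ?case by simp
  next
    case (path_step p v q' w r)
    then obtain x u' where "u = x # u'" "v = [Inr x]" "w = map Inr u'" "p = q' * \<sigma> [x]"
      by (cases u) (auto simp: edges_loop_automaton_iff)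
    with path_step.hyps(3) show ?case by (simp add: mult.assoc)
  qed
next
  show "path (loop_automaton \<sigma>) p (map Inr u) q" if "p = q * (\<Prod>x\<leftarrow>rev u. \<sigma> [x])"
    using that
  proof (induction u arbitrary: p)
    case Nil
    then show ?case by (simp add: path_nil)
  next
    case (Cons x u)
    have "(p, [Inr x], q * (\<Prod>x\<leftarrow>rev u. \<sigma> [x])) \<in> edges (loop_automaton \<sigma>)"
      using Cons.prems by (simp add: edges_loop_automaton_iff mult.assoc)
    from path_step[OF this Cons.IH[OF refl]] show ?case by simp
  qed
qed

lemma Inr_in_cone_loop_automaton_iff:
  "map Inr u \<in> cone (loop_automaton \<sigma>) a \<longleftrightarrow> a = (\<Prod>x\<leftarrow>rev u. \<sigma> [x])"
  by (simp add: cone_def path_loop_automaton_Inr_iff)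

lemma wf_automaton_loop_automaton: "wf_automaton (loop_automaton \<sigma>)"
  by (simp add: wf_automaton_def loop_automaton_def)

lemma deterministic_loop_automaton:
  assumes "right_cancellative TYPE('m::monoid_mult)"
  shows "deterministic (loop_automaton (\<sigma> :: 'x list \<Rightarrow> 'm))"
  using assms unfolding deterministic_def right_cancellative_def
  by (auto simp: edges_loop_automaton_iff)

lemma choice_of_generators_obtain_prod_list:
  assumes "choice_of_generators \<sigma>"
  obtains w where "a = (\<Prod>x\<leftarrow>w. \<sigma> [x])"
proof -
  obtain w where "a = \<sigma> w"
    using assms unfolding choice_of_generators_def by (metis surjD)
  from that[OF trans[OF this choice_of_generators_prod_list[OF assms]]] show thesis .
qed

lemma trim_loop_automaton:
  assumes "choice_of_generators \<sigma>"
  shows "trim (loop_automaton \<sigma>)"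
  unfolding trim_def
proof
  fix a
  obtain w where a: "a = (\<Prod>x\<leftarrow>w. \<sigma> [x])"
    using choice_of_generators_obtain_prod_list[OF assms] .
  have "path (loop_automaton \<sigma>) 1 (map Inl w) a"
    using path_loop_automaton_Inl[of \<sigma> 1 w] a by simp
  moreover have "map Inr (rev w) \<in> cone (loop_automaton \<sigma>) a"
    using a by (simp add: Inr_in_cone_loop_automaton_iff)
  ultimately show "(\<exists>w. path (loop_automaton \<sigma>) (start (loop_automaton \<sigma>)) w a) \<and>
      cone (loop_automaton \<sigma>) a \<noteq> {}"
    by auto
qed

lemma inj_cone_loop_automaton:
  assumes "choice_of_generators \<sigma>"
  shows "inj (cone (loop_automaton \<sigma>))"
proof (rule injI)
  fix a b
  assume same_cone: "cone (loop_automaton \<sigma>) a = cone (loop_automaton \<sigma>) b"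
  obtain w where "a = (\<Prod>x\<leftarrow>w. \<sigma> [x])"
    using choice_of_generators_obtain_prod_list[OF assms] .
  then have "map Inr (rev w) \<in> cone (loop_automaton \<sigma>) b"
    unfolding same_cone[symmetric] by (simp add: Inr_in_cone_loop_automaton_iff)
  with \<open>a = (\<Prod>x\<leftarrow>w. \<sigma> [x])\<close> show "a = b"
    by (simp add: Inr_in_cone_loop_automaton_iff)
qed

theorem proposition7p1:
  fixes \<sigma> :: "'x list \<Rightarrow> 'm::monoid_mult"
  assumes "choice_of_generators \<sigma>"
    and "right_cancellative TYPE('m)"
  shows "is_minimal_automaton_of (loop_automaton \<sigma>) (loop_problem \<sigma>)"
  unfolding is_minimal_automaton_of_def loop_problem_def
  by (simp add: wf_automaton_loop_automaton deterministic_loop_automaton[OF assms(2)]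
      trim_loop_automaton[OF assms(1)] inj_cone_loop_automaton[OF assms(1)])

end
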